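(* Let $W\subset\operatorname{Sym}(n,\mathbb{R})$ be a non-trivial linear subspace, let $r\ge0$, and let $A\in W$ have maximal rank in $W$ (i.e. $\operatorname{rank}A=\max_{M\in W}\operatorname{rank}M$) and signature $(k,\ell_1)$ with $k\ge2$. Then there is $\varepsilon>0$ such that the following holds for every $B\in W$ with $\|B-A\|<\varepsilon$: if $\partial\Gamma_A^r$ and $\partial\Gamma_B^r$ are varieties of dimension $n-1$ and there is no point of $\partial\Gamma_A^r\cap\partial\Gamma_B^r$ at which they intersect transversally, then $\Gamma_A^r\subset\Gamma_B^r$ or $\Gamma_B^r\subset\Gamma_A^r$.
   Context: For $M\in\operatorname{Sym}(n,\mathbb{R})$, $Q_M(z)={}^tzMz$ and $\Gamma_M^r:=\{z\in\mathbb{R}^n:Q_M(z)\le r\}$. Signature $(k,\ell_1)$ means $k$ positive and $\ell_1$ negative eigenvalues. $\partial\Gamma_M^r$ denotes the topological boundary; it is called a variety of dimension $n-1$ if there is some $z\in\partial\Gamma_M^r$ with $Mz\ne0$. The boundaries $\partial\Gamma_A^r$ and $\partial\Gamma_B^r$ intersect transversally at $z\in\partial\Gamma_A^r\cap\partial\Gamma_B^r$ if $Az$ and $Bz$ are linearly independent. $\|\cdot\|$ is any norm on $\operatorname{Sym}(n,\mathbb{R})$. *)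

theory Defs
  imports "HOL-Analysis.Analysis"
begin

definition symmetric_mat :: "real^'n^'n \<Rightarrow> bool" where
  "symmetric_mat M \<longleftrightarrow> transpose M = M"

definition Qform :: "real^'n^'n \<Rightarrow> real^'n \<Rightarrow> real" where
  "Qform M z = z \<bullet> (M *v z)"

definition Gamma :: "real^'n^'n \<Rightarrow> real \<Rightarrow> (real^'n) set" where
  "Gamma M r = {z. Qform M z \<le> r}"

text \<open>Multiplicity of an eigenvalue of a symmetric matrix: dimension of its eigenspace
  (geometric = algebraic multiplicity for symmetric matrices).\<close>
definition eig_mult :: "real^'n^'n \<Rightarrow> real \<Rightarrow> nat" where
  "eig_mult M c = dim {x. M *v x = c *\<^sub>R x}"

definition num_pos_eig :: "real^'n^'n \<Rightarrow> nat" where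
  "num_pos_eig M = (\<Sum>c\<in>{c. c > 0 \<and> (\<exists>x. x \<noteq> 0 \<and> M *v x = c *\<^sub>R x)}. eig_mult M c)"

definition num_neg_eig :: "real^'n^'n \<Rightarrow> nat" where
  "num_neg_eig M = (\<Sum>c\<in>{c. c < 0 \<and> (\<exists>x. x \<noteq> 0 \<and> M *v x = c *\<^sub>R x)}. eig_mult M c)"

definition signature :: "real^'n^'n \<Rightarrow> nat \<times> nat" where
  "signature M = (num_pos_eig M, num_neg_eig M)"

definition bdry_is_variety :: "real^'n^'n \<Rightarrow> real \<Rightarrow> bool" where
  "bdry_is_variety M r \<longleftrightarrow> (\<exists>z \<in> frontier (Gamma M r). M *v z \<noteq> 0)"

definition transversal_at :: "real^'n^'n \<Rightarrow> real^'n^'n \<Rightarrow> real^'n \<Rightarrow> bool" where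
  "transversal_at A B z \<longleftrightarrow>
     (\<forall>a b::real. a *\<^sub>R (A *v z) + b *\<^sub>R (B *v z) = 0 \<longrightarrow> a = 0 \<and> b = 0)"

end

theory Submission
  imports Defs
begin

(*
  Fix u with Q_A u > 0 (it exists since k >= 2) and, when r = 0, w with Q_A w < 0; epsilon is
  chosen so that Q_B u > 0 and Q_B w < 0 for B near A.

  For r > 0 the boundaries are the level sets {Q = r}, and non-transversality there forces
  A z = B z whenever Q_A z = Q_B z > 0. So C = B - A satisfies C z = 0 at every zero of Q_C in
  {Q_A > 0} or in {Q_B > 0}, which prevents Q_C from changing sign on either set. If the
  sublevel sets were not nested, Q_C would have opposite signs there, and C would vanish on the
  open set {Q_A > 0, Q_B > 0}.

  For r = 0, if the sublevel sets were not nested, there would be regular null vectors yp, yn of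
  A with Q_B yp > 0 > Q_B yn. Non-transversality says that the null cones are tangent along
  their intersection, so every zero of Q_B on the null cone of A is critical. The quadratic map
  x |-> Q_A(x) yp - 2 (yp . A x) x sends R^n into the null cone of A; along a line it turns
  Q_B into a real quartic, not a proper cubic, all of whose roots are multiple, and such a
  polynomial cannot change sign. Since k >= 2, the line can start at some x with Q_A x > 0 in
  the hyperplane orthogonal to A yp, which is mapped to a positive multiple of yp.
*)

lemmas matrix_inner_distribs = matrix_vector_mult_scaleR matrix_vector_right_distrib
  matrix_vector_mult_diff_distrib inner_add_left inner_add_right inner_diff_left inner_diff_right
  inner_scaleR_left inner_scaleR_right

lemma symmetric_mat_inner_commute:
  assumes "symmetric_mat A"
  shows "(A *v x) \<bullet> y = x \<bullet> (A *v y)"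
  by (metis assms dot_lmul_matrix symmetric_mat_def vector_transpose_matrix)

lemma symmetric_mat_diff: "symmetric_mat A \<Longrightarrow> symmetric_mat B \<Longrightarrow> symmetric_mat (B - A)"
  unfolding symmetric_mat_def transpose_def by (simp add: vec_eq_iff)

lemma symmetric_mat_uminus: "symmetric_mat A \<Longrightarrow> symmetric_mat (- A)"
  unfolding symmetric_mat_def transpose_def by (simp add: vec_eq_iff)

lemma Qform_zero [simp]: "Qform M 0 = 0"
  by (simp add: Qform_def)

lemma Qform_scaleR [simp]: "Qform M (c *\<^sub>R x) = c\<^sup>2 * Qform M x"
  unfolding Qform_def by (simp add: matrix_vector_mult_scaleR power2_eq_square)

lemma Qform_uminus [simp]: "Qform M (- x) = Qform M x"
  using Qform_scaleR[of M "-1" x] by simp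

lemma Qform_diff_matrix: "Qform (B - A) z = Qform B z - Qform A z"
  unfolding Qform_def by (simp add: matrix_vector_mult_diff_rdistrib inner_diff_right)

lemma Qform_uminus_matrix [simp]: "Qform (- M) x = - Qform M x"
  using Qform_diff_matrix[of 0 M x] by (simp add: Qform_def)

lemma Qform_add_scaleR:
  assumes "symmetric_mat A"
  shows "Qform A (a *\<^sub>R x + b *\<^sub>R y) = a\<^sup>2 * Qform A x + 2 * a * b * (x \<bullet> (A *v y)) + b\<^sup>2 * Qform A y"
  using symmetric_mat_inner_commute[OF assms, of y x]
  unfolding Qform_def
  by (simp add: matrix_vector_right_distrib matrix_vector_mult_scaleR inner_add_left inner_add_right
      inner_commute algebra_simps power2_eq_square)

lemma Qform_add_line:
  assumes "symmetric_mat A"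
  shows "Qform A (x + t *\<^sub>R y) = Qform A x + 2 * t * (x \<bullet> (A *v y)) + t\<^sup>2 * Qform A y"
  using Qform_add_scaleR[OF assms, of 1 x t y] by simp

lemma tendsto_Qform_matrix: "((\<lambda>M. Qform M x) \<longlongrightarrow> Qform A x) (nhds A)"
  for A :: "real^'n^'n"
proof -
  have "linear (\<lambda>M::real^'n^'n. M *v x)"
    by (rule linearI) (simp_all add: matrix_vector_mult_add_rdistrib scaleR_matrix_vector_assoc)
  then have "isCont (\<lambda>M::real^'n^'n. Qform M x) A"
    unfolding Qform_def
    by (intro continuous_intros linear_continuous_at) (simp add: linear_conv_bounded_linear)
  then show ?thesis
    using tendsto_at_iff_tendsto_nhds[of "\<lambda>M. Qform M x" A] by (simp add: isCont_def)
qed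

lemma tendsto_Qform_line:
  assumes "symmetric_mat A"
  shows "((\<lambda>t. Qform A (x + t *\<^sub>R y)) \<longlongrightarrow> Qform A x) (at_right 0)"
  unfolding Qform_add_line[OF assms] by (intro tendsto_eq_intros) auto

lemma eventually_at_right_zero_witness:
  "(\<forall>\<^sub>F t in at_right (0::real). P t) \<Longrightarrow> \<exists>t>0. P t"
  by (metis eventually_at_right_field field_lbound_gt_zero)

(* As Q_M (-u) = Q_M u, this keeps a segment from z to +-u inside {Q_M > 0}
   when both ends are there (see Qform_segment_pos). *)
lemma obtain_sign_inner_nonneg:
  fixes M :: "real^'n^'n"
  obtains v where "v = u \<or> v = - u" "0 \<le> z \<bullet> (M *v v)"
proof (cases "0 \<le> z \<bullet> (M *v u)")
  case False
  then have "0 \<le> z \<bullet> (M *v - u)"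
    using matrix_vector_mult_scaleR[of M "-1" u] by simp
  then show ?thesis using that by blast
qed (use that in blast)

lemma closed_Gamma: "closed (Gamma M r)"
  unfolding Gamma_def Qform_def by (intro closed_Collect_le continuous_intros)

lemma frontier_Gamma_subset: "frontier (Gamma M r) \<subseteq> {z. Qform M z = r}"
proof
  fix z assume z: "z \<in> frontier (Gamma M r)"
  then have "Qform M z \<le> r"
    using closure_closed[OF closed_Gamma] by (auto simp: frontier_def Gamma_def)
  moreover have "open {x. Qform M x < r}"
    unfolding Qform_def by (intro open_Collect_less continuous_intros)
  then have "{x. Qform M x < r} \<subseteq> interior (Gamma M r)"
    by (intro interior_maximal) (auto simp: Gamma_def)
  then have "\<not> Qform M z < r" using z by (auto simp: frontier_def)
  ultimately show "z \<in> {z. Qform M z = r}" by simp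
qed

(* The positive direction u is needed: for negative semidefinite M, Gamma M 0 = UNIV. *)
lemma frontier_Gamma:
  assumes "symmetric_mat M" and "0 < Qform M u"
  shows "frontier (Gamma M r) = {z. Qform M z = r}"
proof
  show "{z. Qform M z = r} \<subseteq> frontier (Gamma M r)"
  proof
    fix z assume "z \<in> {z. Qform M z = r}"
    then have z: "Qform M z = r" by simp
    obtain v where "v = u \<or> v = - u" "0 \<le> z \<bullet> (M *v v)"
      by (rule obtain_sign_inner_nonneg)
    with assms(2) have v: "0 < Qform M v" "0 \<le> z \<bullet> (M *v v)" by auto
    have "\<forall>\<^sub>F t in at_right 0. z + t *\<^sub>R v \<in> - Gamma M r"
      using eventually_at_right_less[of 0]
    proof (rule eventually_mono)
      fix t :: real assume "0 < t"
      then have "0 \<le> 2 * t * (z \<bullet> (M *v v))" "0 < t\<^sup>2 * Qform M v" using v by auto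
      then show "z + t *\<^sub>R v \<in> - Gamma M r"
        using z by (simp add: Gamma_def Qform_add_line[OF assms(1)])
    qed
    moreover have "((\<lambda>t. z + t *\<^sub>R v) \<longlongrightarrow> z) (at_right 0)"
      by (intro tendsto_eq_intros) auto
    ultimately have "z \<in> closure (- Gamma M r)"
      by (intro Lim_in_closed_set[of _ "\<lambda>t. z + t *\<^sub>R v"])
        (auto elim: eventually_mono intro: closure_subset[THEN subsetD])
    moreover have "z \<in> closure (Gamma M r)" using z closure_subset by (force simp: Gamma_def)
    ultimately show "z \<in> frontier (Gamma M r)" by (simp add: frontier_closures)
  qed
qed (rule frontier_Gamma_subset)

lemma continuous_on_Qform_segment:
  assumes "symmetric_mat M"
  shows "continuous_on S (\<lambda>t. Qform M ((1 - t) *\<^sub>R a + t *\<^sub>R b))"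
  unfolding Qform_add_scaleR[OF assms] by (intro continuous_intros)

lemma Qform_segment_pos:
  assumes "symmetric_mat M" and "0 < Qform M a" "0 \<le> Qform M b" "0 \<le> a \<bullet> (M *v b)"
    and "0 \<le> t" "t < 1"
  shows "0 < Qform M ((1 - t) *\<^sub>R a + t *\<^sub>R b)"
proof -
  have "0 < (1 - t)\<^sup>2 * Qform M a" "0 \<le> 2 * (1 - t) * t * (a \<bullet> (M *v b))" "0 \<le> t\<^sup>2 * Qform M b"
    using assms by auto
  then show ?thesis unfolding Qform_add_scaleR[OF assms(1)] by linarith
qed

lemma exists_null_vector_Qform_pos:
  assumes "symmetric_mat M" "symmetric_mat N"
    and "Qform M a \<le> 0" "0 < Qform N a" and "0 < Qform M b" "0 \<le> Qform N b"
  shows "\<exists>y. Qform M y = 0 \<and> 0 < Qform N y"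
proof -
  obtain b' where "b' = b \<or> b' = - b" "0 \<le> a \<bullet> (N *v b')"
    by (rule obtain_sign_inner_nonneg)
  with assms have b': "0 < Qform M b'" "0 \<le> Qform N b'" "0 \<le> a \<bullet> (N *v b')" by auto
  obtain t where t: "0 \<le> t" "t \<le> 1" "Qform M ((1 - t) *\<^sub>R a + t *\<^sub>R b') = 0"
    using IVT'[of "\<lambda>t. Qform M ((1 - t) *\<^sub>R a + t *\<^sub>R b')" 0 0 1] assms(3) b'(1)
      continuous_on_Qform_segment[OF assms(1)] by force
  moreover have "t \<noteq> 1" using t(3) b'(1) by auto
  ultimately show ?thesis
    using Qform_segment_pos[OF assms(2,4) b'(2,3), of t] by auto
qed

lemma Qform_sign_constant_on_positive_cone:
  assumes "symmetric_mat M" "symmetric_mat C"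
    and kernel: "\<And>z. 0 < Qform M z \<Longrightarrow> Qform C z = 0 \<Longrightarrow> C *v z = 0"
    and a: "0 < Qform M a" "0 < Qform C a" and "0 < Qform M b"
  shows "0 \<le> Qform C b"
proof (rule ccontr)
  assume "\<not> 0 \<le> Qform C b"
  obtain b' where "b' = b \<or> b' = - b" "0 \<le> a \<bullet> (M *v b')"
    by (rule obtain_sign_inner_nonneg)
  with assms \<open>\<not> 0 \<le> Qform C b\<close> have b': "0 < Qform M b'" "Qform C b' < 0" "0 \<le> a \<bullet> (M *v b')"
    by auto
  obtain t where t: "0 \<le> t" "t \<le> 1" "Qform C ((1 - t) *\<^sub>R a + t *\<^sub>R b') = 0"
    using IVT2'[of "\<lambda>t. Qform C ((1 - t) *\<^sub>R a + t *\<^sub>R b')" 1 0 0] a(2) b'(2)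
      continuous_on_Qform_segment[OF assms(2)] by force
  have "t \<noteq> 0" "t \<noteq> 1" using t(3) a(2) b'(2) by auto
  define w where "w = (1 - t) *\<^sub>R a + t *\<^sub>R b'"
  have "0 < Qform M w"
    unfolding w_def using Qform_segment_pos[OF assms(1) a(1) _ b'(3)] b'(1) t \<open>t \<noteq> 1\<close> by simp
  then have "C *v w = 0" using kernel t(3) w_def by blast
  then have "a \<bullet> (C *v w) = 0" "b' \<bullet> (C *v w) = 0" by simp_all
  moreover have "b' \<bullet> (C *v a) = a \<bullet> (C *v b')"
    using symmetric_mat_inner_commute[OF assms(2), of b' a] by (simp add: inner_commute)
  ultimately have e1: "(1 - t) * Qform C a = - t * (a \<bullet> (C *v b'))"
    and e2: "t * Qform C b' = - (1 - t) * (a \<bullet> (C *v b'))"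
    unfolding w_def Qform_def by (simp_all add: algebra_simps)
  have "(1 - t)\<^sup>2 * Qform C a = (1 - t) * ((1 - t) * Qform C a)"
    by (simp add: power2_eq_square)
  also have "\<dots> = t * (t * Qform C b')" unfolding e1 e2 by (simp add: algebra_simps)
  finally have "(1 - t)\<^sup>2 * Qform C a = t\<^sup>2 * Qform C b'"
    by (simp add: power2_eq_square)
  moreover have "0 < (1 - t)\<^sup>2 * Qform C a" "t\<^sup>2 * Qform C b' < 0"
    using a(2) b'(2) \<open>t \<noteq> 0\<close> \<open>t \<noteq> 1\<close> by (auto simp: mult_pos_neg)
  ultimately show False by linarith
qed

lemma exists_regular_null_vector_Qform_pos:
  assumes "symmetric_mat A" "symmetric_mat N"
    and y0: "Qform A y0 = 0" "A *v y0 \<noteq> 0" and y: "Qform A y = 0" "0 < Qform N y"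
  shows "\<exists>y'. Qform A y' = 0 \<and> A *v y' \<noteq> 0 \<and> 0 < Qform N y'"
proof (cases "A *v y = 0")
  case True
  have "\<forall>\<^sub>F t in at_right 0. 0 < t \<and> 0 < Qform N (y + t *\<^sub>R y0)"
    using eventually_at_right_less order_tendstoD(1)[OF tendsto_Qform_line[OF assms(2)] y(2)]
    by (rule eventually_conj)
  then obtain t where t: "0 < t" "0 < Qform N (y + t *\<^sub>R y0)"
    using eventually_at_right_zero_witness by blast
  have "y \<bullet> (A *v y0) = 0"
    using symmetric_mat_inner_commute[OF assms(1), of y y0] True by simp
  then have "Qform A (y + t *\<^sub>R y0) = 0"
    using y y0 by (simp add: Qform_add_line[OF assms(1)])
  moreover have "A *v (y + t *\<^sub>R y0) \<noteq> 0"
    using True y0(2) t(1) by (simp add: matrix_vector_right_distrib matrix_vector_mult_scaleR)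
  ultimately show ?thesis using t(2) by blast
qed (use y in blast)

lemma exists_Qform_neg_of_regular_null:
  assumes "symmetric_mat A" and "Qform A z = 0" "A *v z \<noteq> 0"
  shows "\<exists>w. Qform A w < 0"
proof -
  define g where "g = A *v z"
  have "((\<lambda>t. t * Qform A g - 2 * (g \<bullet> g)) \<longlongrightarrow> - 2 * (g \<bullet> g)) (at_right 0)"
    by (intro tendsto_eq_intros) auto
  moreover have "- 2 * (g \<bullet> g) < 0" using assms(3) by (simp add: g_def)
  ultimately have "\<forall>\<^sub>F t in at_right 0. 0 < t \<and> t * Qform A g - 2 * (g \<bullet> g) < 0"
    by (intro eventually_conj eventually_at_right_less order_tendstoD(2))
  then obtain t where t: "0 < t" "t * Qform A g - 2 * (g \<bullet> g) < 0"
    using eventually_at_right_zero_witness by blast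
  have "z \<bullet> (A *v g) = g \<bullet> g"
    using symmetric_mat_inner_commute[OF assms(1), of z g] by (simp add: g_def)
  then have "Qform A (z + (- t) *\<^sub>R g) = t * (t * Qform A g - 2 * (g \<bullet> g))"
    using assms(2) Qform_add_line[OF assms(1), of z "- t" g] by (simp add: algebra_simps power2_eq_square)
  also have "\<dots> < 0" using t by (simp add: mult_pos_neg)
  finally show ?thesis by blast
qed

lemma obtain_two_distinct:
  assumes "2 \<le> card X"
  obtains x y where "x \<in> X" "y \<in> X" "x \<noteq> y"
proof -
  obtain Y where "Y \<subseteq> X" "card Y = 2" "finite Y"
    by (rule obtain_subset_with_card_n[OF assms])
  then show ?thesis using that by (auto simp: card_2_iff)
qed

lemma independent_pair_eq_0:
  fixes x y :: "real^'n"
  assumes "independent S" "x \<in> S" "y \<in> S" "x \<noteq> y" and "a *\<^sub>R x + b *\<^sub>R y = 0"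
  shows "a = 0 \<and> b = 0"
proof -
  let ?u = "\<lambda>v. if v = x then a else b"
  have "(\<Sum>v\<in>{x, y}. ?u v *\<^sub>R v) = 0" using assms(4,5) by simp
  then show ?thesis using independentD[OF assms(1), of "{x, y}" ?u] assms(2-4) by fastforce
qed

lemma symmetric_mat_eigenvectors_orthogonal:
  assumes "symmetric_mat A" "A *v x = c *\<^sub>R x" "A *v y = d *\<^sub>R y" "c \<noteq> d"
  shows "x \<bullet> y = 0"
proof -
  have "c * (x \<bullet> y) = d * (x \<bullet> y)"
    using symmetric_mat_inner_commute[OF assms(1), of x y] assms(2,3) by simp
  then show ?thesis using assms(4) by simp
qed

lemma eigenspace_positive_plane:
  fixes A :: "real^'n^'n"
  assumes "2 \<le> eig_mult A c" "0 < c"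
  obtains e1 e2 where "\<And>a b. a \<noteq> 0 \<or> b \<noteq> 0 \<Longrightarrow> 0 < Qform A (a *\<^sub>R e1 + b *\<^sub>R e2)"
proof -
  define E where "E = {x. A *v x = c *\<^sub>R x}"
  obtain Bs where Bs: "Bs \<subseteq> E" "independent Bs" "card Bs = dim E"
    by (rule basis_exists)
  then have "2 \<le> card Bs" using assms(1) by (simp add: eig_mult_def E_def)
  then obtain e1 e2 where e: "e1 \<in> Bs" "e2 \<in> Bs" "e1 \<noteq> e2"
    by (rule obtain_two_distinct)
  have "0 < Qform A (a *\<^sub>R e1 + b *\<^sub>R e2)" if "a \<noteq> 0 \<or> b \<noteq> 0" for a b
  proof -
    let ?x = "a *\<^sub>R e1 + b *\<^sub>R e2"
    have "?x \<noteq> 0" using independent_pair_eq_0[OF Bs(2) e] that by blast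
    moreover have "A *v e1 = c *\<^sub>R e1" "A *v e2 = c *\<^sub>R e2" using e Bs(1) by (auto simp: E_def)
    then have "A *v ?x = c *\<^sub>R ?x"
      by (simp add: matrix_vector_right_distrib matrix_vector_mult_scaleR scaleR_add_right mult.commute)
    ultimately show ?thesis using assms(2) by (simp add: Qform_def)
  qed
  then show ?thesis using that by blast
qed

lemma eigenvectors_positive_plane:
  fixes A :: "real^'n^'n"
  assumes sym: "symmetric_mat A"
    and x1: "x1 \<noteq> 0" "A *v x1 = c1 *\<^sub>R x1" "0 < c1" and x2: "x2 \<noteq> 0" "A *v x2 = c2 *\<^sub>R x2" "0 < c2"
    and "c1 \<noteq> c2" and ab: "a \<noteq> 0 \<or> b \<noteq> 0"
  shows "0 < Qform A (a *\<^sub>R x1 + b *\<^sub>R x2)"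
proof -
  have "x1 \<bullet> x2 = 0"
    using symmetric_mat_eigenvectors_orthogonal[OF sym x1(2) x2(2) \<open>c1 \<noteq> c2\<close>] .
  then have "Qform A (a *\<^sub>R x1 + b *\<^sub>R x2) = a\<^sup>2 * (c1 * (x1 \<bullet> x1)) + b\<^sup>2 * (c2 * (x2 \<bullet> x2))"
    using Qform_add_scaleR[OF sym, of a x1 b x2] x1 x2 by (simp add: Qform_def)
  moreover have "0 < c1 * (x1 \<bullet> x1)" "0 < c2 * (x2 \<bullet> x2)" using x1 x2 by auto
  ultimately show ?thesis using ab by (auto intro: add_pos_nonneg add_nonneg_pos)
qed

lemma exists_positive_plane:
  fixes A :: "real^'n^'n"
  assumes sym: "symmetric_mat A" and "2 \<le> num_pos_eig A"
  obtains e1 e2 where "\<And>a b. a \<noteq> 0 \<or> b \<noteq> 0 \<Longrightarrow> 0 < Qform A (a *\<^sub>R e1 + b *\<^sub>R e2)"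
proof -
  define S where "S = {c. c > 0 \<and> (\<exists>x. x \<noteq> 0 \<and> A *v x = c *\<^sub>R x)}"
  have sum2: "2 \<le> sum (eig_mult A) S"
    using assms(2) unfolding num_pos_eig_def S_def by simp
  then have "finite S" by (rule contrapos_pp) simp
  show ?thesis
  proof (cases "\<exists>c\<in>S. 2 \<le> eig_mult A c")
    case True
    then show ?thesis using eigenspace_positive_plane that by (auto simp: S_def)
  next
    case False
    then have "\<forall>c\<in>S. eig_mult A c \<le> 1" by (simp add: numeral_2_eq_2 not_le less_Suc_eq_le)
    then have "sum (eig_mult A) S \<le> card S" using sum_mono[of S "eig_mult A" "\<lambda>_. 1"] by simp
    then have "2 \<le> card S" using sum2 by linarith
    then obtain c1 c2 where c: "c1 \<in> S" "c2 \<in> S" "c1 \<noteq> c2" by (rule obtain_two_distinct)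
    obtain x1 where x1: "x1 \<noteq> 0" "A *v x1 = c1 *\<^sub>R x1" "0 < c1" using c(1) by (auto simp: S_def)
    obtain x2 where x2: "x2 \<noteq> 0" "A *v x2 = c2 *\<^sub>R x2" "0 < c2" using c(2) by (auto simp: S_def)
    show ?thesis using eigenvectors_positive_plane[OF sym x1 x2 c(3)] that by blast
  qed
qed

lemma exists_orthogonal_Qform_pos:
  fixes A :: "real^'n^'n"
  assumes "symmetric_mat A" "2 \<le> num_pos_eig A"
  shows "\<exists>x. x \<bullet> h = 0 \<and> 0 < Qform A x"
proof -
  obtain e1 e2 where pos: "\<And>a b. a \<noteq> 0 \<or> b \<noteq> 0 \<Longrightarrow> 0 < Qform A (a *\<^sub>R e1 + b *\<^sub>R e2)"
    using exists_positive_plane[OF assms] by blast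
  show ?thesis
  proof (cases "e2 \<bullet> h = 0 \<and> e1 \<bullet> h = 0")
    case True
    then show ?thesis using pos[of 1 0] by auto
  next
    case False
    then show ?thesis
      using pos[of "e2 \<bullet> h" "- (e1 \<bullet> h)"]
      by (intro exI[of _ "(e2 \<bullet> h) *\<^sub>R e1 + (- (e1 \<bullet> h)) *\<^sub>R e2"]) (auto simp: inner_diff_left mult.commute)
  qed
qed

lemma gradients_eq_on_positive_cone:
  fixes A B :: "real^'n^'n"
  assumes "0 < r" and gradients: "\<And>z. Qform A z = r \<Longrightarrow> Qform B z = r \<Longrightarrow> A *v z = B *v z"
    and "0 < Qform A z" "Qform B z = Qform A z"
  shows "A *v z = B *v z"
proof -
  define c where "c = sqrt (r / Qform A z)"
  have "c \<noteq> 0" "Qform A (c *\<^sub>R z) = r" "Qform B (c *\<^sub>R z) = r"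
    using assms(1,3,4) by (simp_all add: c_def)
  then have "A *v (c *\<^sub>R z) = B *v (c *\<^sub>R z)" using gradients by blast
  then show ?thesis using \<open>c \<noteq> 0\<close> by (simp add: matrix_vector_mult_scaleR)
qed

lemma Gamma_comparable_pos_level:
  fixes A B :: "real^'n^'n"
  assumes symA: "symmetric_mat A" and symB: "symmetric_mat B" and "0 < r"
    and u: "0 < Qform A u" "0 < Qform B u"
    and gradients: "\<And>z. Qform A z = r \<Longrightarrow> Qform B z = r \<Longrightarrow> A *v z = B *v z"
  shows "Gamma A r \<subseteq> Gamma B r \<or> Gamma B r \<subseteq> Gamma A r"
proof (rule ccontr)
  define C where "C = B - A"
  have symC: "symmetric_mat C" unfolding C_def using symA symB by (rule symmetric_mat_diff)
  have QC: "Qform C z = Qform B z - Qform A z" for z unfolding C_def by (rule Qform_diff_matrix)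
  have kernel: "C *v z = 0" if "0 < Qform A z \<or> 0 < Qform B z" "Qform C z = 0" for z
    using gradients_eq_on_positive_cone[OF \<open>0 < r\<close> gradients, of z] that QC[of z]
    by (auto simp: C_def matrix_vector_mult_diff_rdistrib)
  assume "\<not> (Gamma A r \<subseteq> Gamma B r \<or> Gamma B r \<subseteq> Gamma A r)"
  then obtain a b where "Qform A a \<le> r" "r < Qform B a" "Qform B b \<le> r" "r < Qform A b"
    unfolding Gamma_def subset_iff mem_Collect_eq by (meson not_le)
  then have a: "0 < Qform B a" "0 < Qform C a" and b: "0 < Qform A b" "Qform C b < 0"
    using \<open>0 < r\<close> QC by auto
  \<comment> \<open>By \<open>a\<close> and \<open>b\<close>, \<open>Q\<^sub>C\<close> can be neither positive nor negative where both forms are positive.\<close>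
  have common: "C *v v = 0" if v: "0 < Qform A v" "0 < Qform B v" for v
  proof -
    have "0 \<le> Qform C v"
      using Qform_sign_constant_on_positive_cone[OF symB symC _ a v(2)] kernel by blast
    moreover have "\<not> 0 < Qform C v"
      using Qform_sign_constant_on_positive_cone[OF symA symC _ v(1) _ b(1)] kernel b(2) by force
    ultimately show ?thesis using kernel v by simp
  qed
  have "\<forall>\<^sub>F t in at_right 0. 0 < t \<and> 0 < Qform A (u + t *\<^sub>R b) \<and> 0 < Qform B (u + t *\<^sub>R b)"
    by (intro eventually_conj eventually_at_right_less order_tendstoD(1)[OF tendsto_Qform_line] u symA symB)
  then obtain t where "0 < t" "0 < Qform A (u + t *\<^sub>R b)" "0 < Qform B (u + t *\<^sub>R b)"
    using eventually_at_right_zero_witness by blast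
  then have "t *\<^sub>R (C *v b) = 0"
    using common[OF u] common[of "u + t *\<^sub>R b"] by (simp add: matrix_vector_right_distrib matrix_vector_mult_scaleR)
  then have "Qform C b = 0" using \<open>0 < t\<close> by (simp add: Qform_def)
  then show False using b(2) by simp
qed

lemma IVT_unit_interval:
  fixes f :: "real \<Rightarrow> real"
  assumes "continuous_on {0..1} f" "0 < f 0" "f 1 < 0"
  obtains x where "0 < x" "x < 1" "f x = 0"
proof -
  obtain x where "0 \<le> x" "x \<le> 1" "f x = 0" using IVT2'[of f 1 0 0] assms by force
  moreover have "x \<noteq> 0" "x \<noteq> 1" using assms \<open>f x = 0\<close> by auto
  ultimately show ?thesis using that by (simp add: less_le)
qed

lemma quadratic_sign_change_simple_root:
  fixes a0 a1 a2 :: real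
  assumes "0 < a0" "a0 + a1 + a2 < 0"
  obtains s where "0 < s" "s < 1" "a0 + a1 * s + a2 * s\<^sup>2 = 0" "a1 + 2 * a2 * s \<noteq> 0"
proof -
  obtain s where s: "0 < s" "s < 1" "a0 + a1 * s + a2 * s\<^sup>2 = 0"
    by (rule IVT_unit_interval[of "\<lambda>t. a0 + a1 * t + a2 * t\<^sup>2"])
      (use assms in \<open>auto intro!: continuous_intros\<close>)
  have "a1 + 2 * a2 * s \<noteq> 0"
  proof
    assume "a1 + 2 * a2 * s = 0"
    then have a1: "a1 = - 2 * a2 * s" by simp
    then have "a0 = a2 * s\<^sup>2" using s(3) by (simp add: power2_eq_square)
    then have "a0 + a1 + a2 = a2 * (1 - s)\<^sup>2" unfolding a1 by (simp add: algebra_simps power2_eq_square)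
    moreover have "0 < a2" using \<open>a0 = a2 * s\<^sup>2\<close> assms(1) by (simp add: zero_less_mult_iff)
    ultimately show False using assms(2) by (simp add: mult_less_0_iff)
  qed
  with s show ?thesis using that by blast
qed

lemma cubic_times_linear_no_sign_change:
  fixes r a b :: real
  assumes "0 < r" "r < 1"
    and multiple_roots: "\<And>t. (t - r) ^ 3 * (a * t + b) = 0 \<Longrightarrow> 3 * (t - r)\<^sup>2 * (a * t + b) + (t - r) ^ 3 * a = 0"
    and not_cubic: "a = 0 \<Longrightarrow> b = 0" and "0 < (- r) ^ 3 * b"
  shows "0 \<le> (1 - r) ^ 3 * (a + b)"
proof (rule ccontr)
  assume "\<not> 0 \<le> (1 - r) ^ 3 * (a + b)"
  moreover have "0 < (1 - r) ^ 3" using assms(2) by simp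
  ultimately have "a + b < 0" by (simp add: zero_le_mult_iff not_le)
  have "(- r) ^ 3 < 0" using assms(1) by simp
  then have "b < 0" using assms(5) by (simp add: zero_less_mult_iff mult_less_0_iff)
  then have "a \<noteq> 0" using not_cubic by auto
  then have "a * (- b / a) + b = 0" by simp
  then have "(- b / a - r) ^ 3 * a = 0" using multiple_roots[of "- b / a"] by simp
  then have "a * r + b = 0" using \<open>a \<noteq> 0\<close> \<open>a * (- b / a) + b = 0\<close> by simp
  moreover have "a * r + b = (1 - r) * b + r * (a + b)" by (simp add: algebra_simps)
  moreover have "(1 - r) * b < 0" "r * (a + b) < 0"
    using assms(1,2) \<open>b < 0\<close> \<open>a + b < 0\<close> by (simp_all add: mult_pos_neg)
  ultimately show False by linarith
qed

lemma square_times_quadratic_no_sign_change: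
  fixes r a0 a1 a2 :: real
  assumes "0 < r" "r < 1"
    and multiple_roots: "\<And>t. (t - r)\<^sup>2 * (a0 + a1 * t + a2 * t\<^sup>2) = 0 \<Longrightarrow>
      2 * (t - r) * (a0 + a1 * t + a2 * t\<^sup>2) + (t - r)\<^sup>2 * (a1 + 2 * a2 * t) = 0"
    and not_cubic: "a2 = 0 \<Longrightarrow> a1 = 0" and "0 < a0"
  shows "0 \<le> a0 + a1 + a2"
proof (rule ccontr)
  assume "\<not> 0 \<le> a0 + a1 + a2"
  then have "a0 + a1 + a2 < 0" by simp
  then obtain s where s: "0 < s" "s < 1" "a0 + a1 * s + a2 * s\<^sup>2 = 0" "a1 + 2 * a2 * s \<noteq> 0"
    by (rule quadratic_sign_change_simple_root[OF \<open>0 < a0\<close>])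
  then have "(s - r)\<^sup>2 * (a1 + 2 * a2 * s) = 0" using multiple_roots[of s] by simp
  then have "s = r" using s(4) by simp
  define b where "b = a1 + a2 * r"
  have a0: "a0 = - b * r" using s(3) \<open>s = r\<close> by (simp add: b_def algebra_simps power2_eq_square)
  have cubic: "(t - r)\<^sup>2 * (a0 + a1 * t + a2 * t\<^sup>2) = (t - r) ^ 3 * (a2 * t + b)" for t
    unfolding a0 b_def by (simp add: algebra_simps power2_eq_square power3_eq_cube)
  have cubic': "2 * (t - r) * (a0 + a1 * t + a2 * t\<^sup>2) + (t - r)\<^sup>2 * (a1 + 2 * a2 * t)
      = 3 * (t - r)\<^sup>2 * (a2 * t + b) + (t - r) ^ 3 * a2" for t
    unfolding a0 b_def by (simp add: algebra_simps power2_eq_square power3_eq_cube)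
  have "0 \<le> (1 - r) ^ 3 * (a2 + b)"
  proof (rule cubic_times_linear_no_sign_change[OF assms(1,2)])
    show "3 * (t - r)\<^sup>2 * (a2 * t + b) + (t - r) ^ 3 * a2 = 0" if "(t - r) ^ 3 * (a2 * t + b) = 0" for t
      using multiple_roots[of t] that unfolding cubic cubic' by simp
    show "a2 = 0 \<Longrightarrow> b = 0" using not_cubic by (simp add: b_def)
    have "(- r) ^ 3 * b = r\<^sup>2 * a0" unfolding a0 by (simp add: power2_eq_square power3_eq_cube)
    then show "0 < (- r) ^ 3 * b" using \<open>0 < a0\<close> \<open>0 < r\<close> by simp
  qed
  then have "0 \<le> (1 - r)\<^sup>2 * (a0 + a1 + a2)" using cubic[of 1] by simp
  then show False using \<open>\<not> 0 \<le> a0 + a1 + a2\<close> \<open>r < 1\<close> by (simp add: zero_le_mult_iff)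
qed

(* Without not_cubic, (t - 1/2)^3 would be a counterexample. *)
lemma quartic_no_sign_change:
  fixes c0 c1 c2 c3 c4 :: real
  assumes multiple_roots: "\<And>t. c0 + c1 * t + c2 * t\<^sup>2 + c3 * t ^ 3 + c4 * t ^ 4 = 0 \<Longrightarrow>
      c1 + 2 * c2 * t + 3 * c3 * t\<^sup>2 + 4 * c4 * t ^ 3 = 0"
    and not_cubic: "c4 = 0 \<Longrightarrow> c3 = 0" and "0 < c0"
  shows "0 \<le> c0 + c1 + c2 + c3 + c4"
proof (rule ccontr)
  assume "\<not> 0 \<le> c0 + c1 + c2 + c3 + c4"
  obtain r where r: "0 < r" "r < 1" "c0 + c1 * r + c2 * r\<^sup>2 + c3 * r ^ 3 + c4 * r ^ 4 = 0"
    by (rule IVT_unit_interval[of "\<lambda>t. c0 + c1 * t + c2 * t\<^sup>2 + c3 * t ^ 3 + c4 * t ^ 4"])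
      (use \<open>0 < c0\<close> \<open>\<not> 0 \<le> c0 + c1 + c2 + c3 + c4\<close> in \<open>auto intro!: continuous_intros\<close>)
  have c1: "c1 = - 2 * c2 * r - 3 * c3 * r\<^sup>2 - 4 * c4 * r ^ 3"
    using multiple_roots[OF r(3)] by simp
  have c0: "c0 = c2 * r\<^sup>2 + 2 * c3 * r ^ 3 + 3 * c4 * r ^ 4"
    using r(3) unfolding c1 by (simp add: algebra_simps power2_eq_square power3_eq_cube power4_eq_xxxx)
  define a2 where "a2 = c4"
  define a1 where "a1 = c3 + 2 * r * c4"
  define a0 where "a0 = c2 + 2 * r * c3 + 3 * r\<^sup>2 * c4"
  have P: "c0 + c1 * t + c2 * t\<^sup>2 + c3 * t ^ 3 + c4 * t ^ 4 = (t - r)\<^sup>2 * (a0 + a1 * t + a2 * t\<^sup>2)" for t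
    unfolding a0_def a1_def a2_def c0 c1
    by (simp add: algebra_simps power2_eq_square power3_eq_cube power4_eq_xxxx)
  have P': "c1 + 2 * c2 * t + 3 * c3 * t\<^sup>2 + 4 * c4 * t ^ 3
      = 2 * (t - r) * (a0 + a1 * t + a2 * t\<^sup>2) + (t - r)\<^sup>2 * (a1 + 2 * a2 * t)" for t
    unfolding a0_def a1_def a2_def c1
    by (simp add: algebra_simps power2_eq_square power3_eq_cube)
  have "0 \<le> a0 + a1 + a2"
  proof (rule square_times_quadratic_no_sign_change[OF r(1,2)])
    show "2 * (t - r) * (a0 + a1 * t + a2 * t\<^sup>2) + (t - r)\<^sup>2 * (a1 + 2 * a2 * t) = 0"
      if "(t - r)\<^sup>2 * (a0 + a1 * t + a2 * t\<^sup>2) = 0" for t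
      using multiple_roots[of t] that unfolding P P' by simp
    show "a2 = 0 \<Longrightarrow> a1 = 0" using not_cubic by (simp add: a1_def a2_def)
    show "0 < a0" using P[of 0] \<open>0 < c0\<close> by (simp add: zero_less_mult_iff)
  qed
  then show False using P[of 1] \<open>\<not> 0 \<le> c0 + c1 + c2 + c3 + c4\<close> by simp
qed

(* critical_at_infinity is the same condition at the point t = infinity of the curve, i.e. at
   s = 0 for the reversed curve p2 + s p1 + s^2 p0. *)
lemma Qform_quadratic_curve_no_sign_change:
  fixes C :: "real^'n^'n"
  assumes sym: "symmetric_mat C"
    and critical: "\<And>t. Qform C (p0 + t *\<^sub>R p1 + t\<^sup>2 *\<^sub>R p2) = 0 \<Longrightarrow>
      (p0 + t *\<^sub>R p1 + t\<^sup>2 *\<^sub>R p2) \<bullet> (C *v (p1 + (2 * t) *\<^sub>R p2)) = 0"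
    and critical_at_infinity: "Qform C p2 = 0 \<Longrightarrow> p2 \<bullet> (C *v p1) = 0"
    and "0 < Qform C p0"
  shows "0 \<le> Qform C (p0 + p1 + p2)"
proof -
  have s: "\<And>a b. (C *v a) \<bullet> b = a \<bullet> (C *v b)" by (rule symmetric_mat_inner_commute[OF sym])
  define c0 where "c0 = Qform C p0"
  define c1 where "c1 = 2 * (p0 \<bullet> (C *v p1))"
  define c2 where "c2 = Qform C p1 + 2 * (p0 \<bullet> (C *v p2))"
  define c3 where "c3 = 2 * (p1 \<bullet> (C *v p2))"
  define c4 where "c4 = Qform C p2"
  note defs = c0_def c1_def c2_def c3_def c4_def Qform_def
  have P: "Qform C (p0 + t *\<^sub>R p1 + t\<^sup>2 *\<^sub>R p2) = c0 + c1 * t + c2 * t\<^sup>2 + c3 * t ^ 3 + c4 * t ^ 4" for t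
    using s[of p0 p1] s[of p1 p0] s[of p0 p2] s[of p2 p0] s[of p1 p2] s[of p2 p1] unfolding defs
    by (simp add: matrix_inner_distribs algebra_simps inner_commute power2_eq_square power3_eq_cube power4_eq_xxxx)
  have P': "2 * ((p0 + t *\<^sub>R p1 + t\<^sup>2 *\<^sub>R p2) \<bullet> (C *v (p1 + (2 * t) *\<^sub>R p2)))
      = c1 + 2 * c2 * t + 3 * c3 * t\<^sup>2 + 4 * c4 * t ^ 3" for t
    using s[of p0 p1] s[of p1 p0] s[of p0 p2] s[of p2 p0] s[of p1 p2] s[of p2 p1] unfolding defs
    by (simp add: matrix_inner_distribs algebra_simps inner_commute power2_eq_square power3_eq_cube)
  have "0 \<le> c0 + c1 + c2 + c3 + c4"
  proof (rule quartic_no_sign_change)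
    show "c1 + 2 * c2 * t + 3 * c3 * t\<^sup>2 + 4 * c4 * t ^ 3 = 0"
      if "c0 + c1 * t + c2 * t\<^sup>2 + c3 * t ^ 3 + c4 * t ^ 4 = 0" for t
      using critical[of t] that P[of t] P'[of t] by simp
    show "c4 = 0 \<Longrightarrow> c3 = 0"
      using critical_at_infinity s[of p2 p1] unfolding c4_def c3_def by (simp add: inner_commute)
    show "0 < c0" using \<open>0 < Qform C p0\<close> by (simp add: c0_def)
  qed
  then show ?thesis using P[of 1] by simp
qed

definition tangent_null_cones :: "real^'n^'n \<Rightarrow> real^'n^'n \<Rightarrow> bool" where
  "tangent_null_cones A B \<longleftrightarrow>
     (\<forall>z. Qform A z = 0 \<longrightarrow> Qform B z = 0 \<longrightarrow> A *v z \<noteq> 0 \<longrightarrow> (\<exists>\<mu>. B *v z = \<mu> *\<^sub>R (A *v z)))"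

lemma tangent_null_cones_inner_eq_0:
  assumes symA: "symmetric_mat A" and symB: "symmetric_mat B" and "tangent_null_cones A B"
    and z: "Qform A z = 0" "Qform B z = 0" "A *v z = 0 \<Longrightarrow> z = 0" and "z \<bullet> (A *v w) = 0"
  shows "z \<bullet> (B *v w) = 0"
proof (cases "A *v z = 0")
  case False
  then obtain \<mu> where "B *v z = \<mu> *\<^sub>R (A *v z)"
    using assms(3) z unfolding tangent_null_cones_def by blast
  then have "z \<bullet> (B *v w) = \<mu> * (z \<bullet> (A *v w))"
    by (metis inner_scaleR_left symA symB symmetric_mat_inner_commute)
  then show ?thesis using \<open>z \<bullet> (A *v w) = 0\<close> by simp
qed (use z in simp)

lemma null_curve_no_sign_change:
  assumes symA: "symmetric_mat A" and symB: "symmetric_mat B" and "tangent_null_cones A B"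
    and on_cone: "\<And>t. Qform A (p0 + t *\<^sub>R p1 + t\<^sup>2 *\<^sub>R p2) = 0"
    and regular: "\<And>t. A *v (p0 + t *\<^sub>R p1 + t\<^sup>2 *\<^sub>R p2) = 0 \<Longrightarrow> p0 + t *\<^sub>R p1 + t\<^sup>2 *\<^sub>R p2 = 0"
    and tangent: "\<And>t. (p0 + t *\<^sub>R p1 + t\<^sup>2 *\<^sub>R p2) \<bullet> (A *v (p1 + (2 * t) *\<^sub>R p2)) = 0"
    and at_infinity: "Qform A p2 = 0" "A *v p2 = 0 \<Longrightarrow> p2 = 0" "p2 \<bullet> (A *v p1) = 0"
    and "0 < Qform B p0"
  shows "0 \<le> Qform B (p0 + p1 + p2)"
  using symB
proof (rule Qform_quadratic_curve_no_sign_change)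
  show "(p0 + t *\<^sub>R p1 + t\<^sup>2 *\<^sub>R p2) \<bullet> (B *v (p1 + (2 * t) *\<^sub>R p2)) = 0"
    if "Qform B (p0 + t *\<^sub>R p1 + t\<^sup>2 *\<^sub>R p2) = 0" for t
    using tangent_null_cones_inner_eq_0[OF symA symB assms(3) on_cone that regular tangent] .
  show "p2 \<bullet> (B *v p1) = 0" if "Qform B p2 = 0"
    using tangent_null_cones_inner_eq_0[OF symA symB assms(3) at_infinity(1) that at_infinity(2,3)] .
qed fact

(* For Q_A y = 0, the line y + s x meets the null cone of A again at s = -2 (y . A x) / Q_A x;
   cone_param A y x is that point scaled by Q_A x, so it maps R^n quadratically into the cone. *)
definition cone_param :: "real^'n^'n \<Rightarrow> real^'n \<Rightarrow> real^'n \<Rightarrow> real^'n" where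
  "cone_param A y x = Qform A x *\<^sub>R y - (2 * (y \<bullet> (A *v x))) *\<^sub>R x"

definition cone_param_polar :: "real^'n^'n \<Rightarrow> real^'n \<Rightarrow> real^'n \<Rightarrow> real^'n \<Rightarrow> real^'n" where
  "cone_param_polar A y x v =
     (2 * (x \<bullet> (A *v v))) *\<^sub>R y - (2 * (y \<bullet> (A *v v))) *\<^sub>R x - (2 * (y \<bullet> (A *v x))) *\<^sub>R v"

lemma Qform_cone_param:
  assumes "symmetric_mat A" "Qform A y = 0"
  shows "Qform A (cone_param A y x) = 0"
  using assms(2) symmetric_mat_inner_commute[OF assms(1), of x y]
  unfolding cone_param_def Qform_def
  by (simp add: matrix_inner_distribs algebra_simps inner_commute power2_eq_square)

lemma cone_param_polar_orthogonal:
  assumes "symmetric_mat A" "Qform A y = 0"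
  shows "cone_param A y x \<bullet> (A *v cone_param_polar A y x v) = 0"
proof -
  have s: "\<And>a b. (A *v a) \<bullet> b = a \<bullet> (A *v b)" by (rule symmetric_mat_inner_commute[OF assms(1)])
  show ?thesis
    using assms(2) s[of x y] s[of y x] s[of x v] s[of v x] s[of y v] s[of v y]
    unfolding cone_param_def cone_param_polar_def Qform_def
    by (simp add: matrix_inner_distribs algebra_simps inner_commute)
qed

lemma cone_param_add_scaleR:
  assumes "symmetric_mat A"
  shows "cone_param A y (x + t *\<^sub>R v) =
    cone_param A y x + t *\<^sub>R cone_param_polar A y x v + t\<^sup>2 *\<^sub>R cone_param A y v"
  using symmetric_mat_inner_commute[OF assms, of x v] symmetric_mat_inner_commute[OF assms, of v x]
  unfolding cone_param_def cone_param_polar_def Qform_def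
  by (simp add: matrix_inner_distribs algebra_simps inner_commute power2_eq_square)

lemma cone_param_polar_commute:
  assumes "symmetric_mat A"
  shows "cone_param_polar A y x v = cone_param_polar A y v x"
  using symmetric_mat_inner_commute[OF assms, of x v]
  unfolding cone_param_polar_def by (simp add: algebra_simps inner_commute)

lemma cone_param_polar_add_scaleR:
  "cone_param_polar A y (x + t *\<^sub>R v) v = cone_param_polar A y x v + (2 * t) *\<^sub>R cone_param A y v"
  unfolding cone_param_polar_def cone_param_def Qform_def
  by (simp add: matrix_inner_distribs vec_eq_iff algebra_simps)

lemma cone_param_regular:
  assumes symA: "symmetric_mat A" and y: "Qform A y = 0" "A *v y \<noteq> 0"
    and "A *v cone_param A y x = 0"
  shows "cone_param A y x = 0"
proof (rule ccontr)
  assume ne: "cone_param A y x \<noteq> 0"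
  have eq: "Qform A x *\<^sub>R (A *v y) = (2 * (y \<bullet> (A *v x))) *\<^sub>R (A *v x)"
    using assms(4) unfolding cone_param_def by (simp add: matrix_inner_distribs)
  show False
  proof (cases "Qform A x = 0")
    case True
    then have "y \<bullet> (A *v x) = 0" using eq by auto
    then show False using ne True by (simp add: cone_param_def)
  next
    case False
    define \<kappa> where "\<kappa> = 2 * (y \<bullet> (A *v x)) / Qform A x"
    have Ay: "A *v y = \<kappa> *\<^sub>R (A *v x)"
      using eq False unfolding \<kappa>_def
      by (metis divide_inverse_commute inverse_eq_divide scaleR_scaleR vector_fraction_eq_iff)
    have "Qform A y = \<kappa>\<^sup>2 * Qform A x"
      using symmetric_mat_inner_commute[OF symA, of y x] Ay
      by (simp add: Qform_def power2_eq_square inner_commute)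
    moreover have "\<kappa> \<noteq> 0" using Ay y(2) by auto
    ultimately show False using y(1) False by simp
  qed
qed

lemma exists_cone_param_neg:
  assumes symA: "symmetric_mat A" and symB: "symmetric_mat B"
    and yp: "Qform A yp = 0" and yn: "Qform A yn = 0" "A *v yn \<noteq> 0" "Qform B yn < 0"
    and not_parallel: "\<And>c. A *v yp \<noteq> c *\<^sub>R (A *v yn)"
  shows "\<exists>x. Qform B (cone_param A yp x) < 0"
proof (cases "yp \<bullet> (A *v yn) = 0")
  case False
  have "cone_param A yp yn = (- 2 * (yp \<bullet> (A *v yn))) *\<^sub>R yn"
    using yn(1) by (simp add: cone_param_def)
  then have "Qform B (cone_param A yp yn) = (2 * (yp \<bullet> (A *v yn)))\<^sup>2 * Qform B yn"
    by (simp add: power2_eq_square)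
  also have "\<dots> < 0" using False yn(3) by (simp add: mult_pos_neg)
  finally show ?thesis by blast
next
  case True
  \<comment> \<open>\<open>v\<close> is the component of \<open>A yp\<close> orthogonal to \<open>A yn\<close>, so \<open>yn \<bullet> A v = 0 \<noteq> yp \<bullet> A v\<close>.\<close>
  define v where "v = A *v yp - (((A *v yp) \<bullet> (A *v yn)) / ((A *v yn) \<bullet> (A *v yn))) *\<^sub>R (A *v yn)"
  have "(A *v yn) \<bullet> v = 0" using yn(2) by (simp add: v_def inner_diff_right inner_commute)
  then have yn_v: "yn \<bullet> (A *v v) = 0" and yp_v: "yp \<bullet> (A *v v) = v \<bullet> v"
    using symmetric_mat_inner_commute[OF symA, of yn v] symmetric_mat_inner_commute[OF symA, of yp v]
    by (auto simp: v_def inner_diff_left inner_commute)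
  have "v \<noteq> 0" using not_parallel by (auto simp: v_def)
  define g where "g = (- 2 * (yp \<bullet> (A *v v))) *\<^sub>R yn"
  define h where "h = cone_param A yp v"
  have curve: "cone_param A yp (yn + t *\<^sub>R v) = t *\<^sub>R (g + t *\<^sub>R h)" for t
    using cone_param_add_scaleR[OF symA, of yp yn t v] yn(1) True yn_v
    by (simp add: cone_param_def cone_param_polar_def g_def h_def algebra_simps power2_eq_square)
  have "Qform B g = (2 * (yp \<bullet> (A *v v)))\<^sup>2 * Qform B yn" by (simp add: g_def power2_eq_square)
  also have "\<dots> < 0" using yp_v \<open>v \<noteq> 0\<close> yn(3) by (simp add: mult_pos_neg)
  finally have "\<forall>\<^sub>F t in at_right 0. 0 < t \<and> Qform B (g + t *\<^sub>R h) < 0"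
    by (intro eventually_conj eventually_at_right_less order_tendstoD(2)[OF tendsto_Qform_line[OF symB]])
  then obtain t where "0 < t" "Qform B (g + t *\<^sub>R h) < 0"
    using eventually_at_right_zero_witness by blast
  then have "Qform B (cone_param A yp (yn + t *\<^sub>R v)) < 0"
    unfolding curve by (simp add: mult_pos_neg)
  then show ?thesis by blast
qed

lemma parallel_regular_null_vectors_same_sign:
  fixes A B :: "real^'n^'n"
  assumes symA: "symmetric_mat A" and symB: "symmetric_mat B" and tangent: "tangent_null_cones A B"
    and yp: "Qform A yp = 0" "A *v yp \<noteq> 0" "0 < Qform B yp"
    and parallel: "A *v yp = c *\<^sub>R (A *v yn)"
  shows "0 \<le> Qform B yn"
proof -
  \<comment> \<open>\<open>A\<close> is constant on the segment from \<open>yp\<close> to \<open>c yn\<close>, so the segment lies in the null cone.\<close>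
  define d where "d = c *\<^sub>R yn - yp"
  have Ad: "A *v d = 0"
    by (simp add: d_def parallel matrix_vector_mult_diff_distrib matrix_vector_mult_scaleR)
  have "c \<noteq> 0" using parallel yp(2) by auto
  have "0 \<le> Qform B (yp + d + 0)"
  proof (rule null_curve_no_sign_change[OF symA symB tangent])
    fix t :: real
    have "A *v (yp + t *\<^sub>R d + t\<^sup>2 *\<^sub>R 0) = A *v yp"
      using Ad by (simp add: matrix_vector_right_distrib matrix_vector_mult_scaleR)
    moreover have "yp \<bullet> (A *v d) = 0" "Qform A d = 0" using Ad by (simp_all add: Qform_def)
    ultimately show "Qform A (yp + t *\<^sub>R d + t\<^sup>2 *\<^sub>R 0) = 0"
      "A *v (yp + t *\<^sub>R d + t\<^sup>2 *\<^sub>R 0) = 0 \<Longrightarrow> yp + t *\<^sub>R d + t\<^sup>2 *\<^sub>R 0 = 0"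
      "(yp + t *\<^sub>R d + t\<^sup>2 *\<^sub>R 0) \<bullet> (A *v (d + (2 * t) *\<^sub>R 0)) = 0"
      using yp(1,2) Ad by (simp_all add: Qform_add_line[OF symA])
  qed (use yp(3) in simp_all)
  moreover have "Qform B (yp + d + 0) = c\<^sup>2 * Qform B yn" by (simp add: d_def)
  ultimately show ?thesis using \<open>c \<noteq> 0\<close> by (simp add: zero_le_mult_iff)
qed

lemma Qform_cone_param_sign_constant:
  fixes A B :: "real^'n^'n"
  assumes symA: "symmetric_mat A" and symB: "symmetric_mat B" and tangent: "tangent_null_cones A B"
    and y: "Qform A y = 0" "A *v y \<noteq> 0" and pos: "0 < Qform B (cone_param A y x)"
  shows "0 \<le> Qform B (cone_param A y x')"
proof -
  define d where "d = x' - x"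
  let ?\<gamma> = "\<lambda>t. cone_param A y x + t *\<^sub>R cone_param_polar A y x d + t\<^sup>2 *\<^sub>R cone_param A y d"
  have \<gamma>: "?\<gamma> t = cone_param A y (x + t *\<^sub>R d)" for t
    by (simp add: cone_param_add_scaleR[OF symA])
  have \<gamma>': "cone_param_polar A y x d + (2 * t) *\<^sub>R cone_param A y d = cone_param_polar A y (x + t *\<^sub>R d) d" for t
    by (simp add: cone_param_polar_add_scaleR)
  have "0 \<le> Qform B (?\<gamma> 1)"
    unfolding scaleR_one power_one add.assoc[symmetric]
  proof (rule null_curve_no_sign_change[OF symA symB tangent])
    fix t :: real
    show "Qform A (?\<gamma> t) = 0" unfolding \<gamma> by (rule Qform_cone_param[OF symA y(1)])
    show "?\<gamma> t = 0" if "A *v ?\<gamma> t = 0"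
      using that unfolding \<gamma> by (rule cone_param_regular[OF symA y])
    show "?\<gamma> t \<bullet> (A *v (cone_param_polar A y x d + (2 * t) *\<^sub>R cone_param A y d)) = 0"
      unfolding \<gamma> \<gamma>' by (rule cone_param_polar_orthogonal[OF symA y(1)])
  next
    show "Qform A (cone_param A y d) = 0" by (rule Qform_cone_param[OF symA y(1)])
    show "cone_param A y d = 0" if "A *v cone_param A y d = 0"
      using that by (rule cone_param_regular[OF symA y])
    show "cone_param A y d \<bullet> (A *v cone_param_polar A y x d) = 0"
      using cone_param_polar_orthogonal[OF symA y(1), of d x]
      by (simp add: cone_param_polar_commute[OF symA])
  qed (use pos in simp)
  then show ?thesis using \<gamma>[of 1] by (simp add: d_def)
qed

lemma regular_null_vectors_same_sign:
  fixes A B :: "real^'n^'n"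
  assumes symA: "symmetric_mat A" and symB: "symmetric_mat B"
    and pos_perp: "\<And>h. \<exists>x. x \<bullet> h = 0 \<and> 0 < Qform A x"
    and tangent: "tangent_null_cones A B"
    and yp: "Qform A yp = 0" "A *v yp \<noteq> 0" "0 < Qform B yp"
    and yn: "Qform A yn = 0" "A *v yn \<noteq> 0"
  shows "0 \<le> Qform B yn"
proof (rule ccontr)
  assume "\<not> 0 \<le> Qform B yn"
  moreover have "\<And>c. A *v yp \<noteq> c *\<^sub>R (A *v yn)"
    using parallel_regular_null_vectors_same_sign[OF symA symB tangent yp] \<open>\<not> 0 \<le> Qform B yn\<close> by blast
  ultimately obtain xn where "Qform B (cone_param A yp xn) < 0"
    using exists_cone_param_neg[OF symA symB yp(1) yn] by force
  moreover obtain xp where xp: "xp \<bullet> (A *v yp) = 0" "0 < Qform A xp" using pos_perp by blast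
  then have "cone_param A yp xp = Qform A xp *\<^sub>R yp"
    using symmetric_mat_inner_commute[OF symA, of yp xp] by (simp add: cone_param_def inner_commute)
  then have "0 < Qform B (cone_param A yp xp)" using xp(2) yp(3) by simp
  ultimately show False
    using Qform_cone_param_sign_constant[OF symA symB tangent yp(1,2), of xp xn] by simp
qed

lemma Gamma_comparable_zero_level:
  fixes A B :: "real^'n^'n"
  assumes symA: "symmetric_mat A" and symB: "symmetric_mat B"
    and pos_perp: "\<And>h. \<exists>x. x \<bullet> h = 0 \<and> 0 < Qform A x"
    and tangent: "tangent_null_cones A B"
    and y0: "Qform A y0 = 0" "A *v y0 \<noteq> 0"
    and u: "0 < Qform A u" "0 < Qform B u" and w: "Qform A w < 0" "Qform B w < 0"
  shows "Gamma A 0 \<subseteq> Gamma B 0 \<or> Gamma B 0 \<subseteq> Gamma A 0"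
proof (rule ccontr)
  assume "\<not> (Gamma A 0 \<subseteq> Gamma B 0 \<or> Gamma B 0 \<subseteq> Gamma A 0)"
  then obtain q p where q: "Qform A q \<le> 0" "0 < Qform B q" and p: "Qform B p \<le> 0" "0 < Qform A p"
    unfolding Gamma_def subset_iff mem_Collect_eq by (meson not_le)
  obtain y1 where "Qform A y1 = 0" "0 < Qform B y1"
    using exists_null_vector_Qform_pos[OF symA symB q u(1) less_imp_le[OF u(2)]] by blast
  then obtain yp where yp: "Qform A yp = 0" "A *v yp \<noteq> 0" "0 < Qform B yp"
    using exists_regular_null_vector_Qform_pos[OF symA symB y0] by blast
  obtain y2 where "Qform A y2 = 0" "0 < Qform (- B) y2"
    using exists_null_vector_Qform_pos[OF symA symmetric_mat_uminus[OF symB], of w p] w p by auto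
  then obtain yn where yn: "Qform A yn = 0" "A *v yn \<noteq> 0" "0 < Qform (- B) yn"
    using exists_regular_null_vector_Qform_pos[OF symA symmetric_mat_uminus[OF symB] y0] by blast
  show False
    using regular_null_vectors_same_sign[OF symA symB pos_perp tangent yp yn(1,2)] yn(3) by simp
qed

lemma nontransversal_parallel:
  assumes "\<not> transversal_at A B z" "A *v z \<noteq> 0"
  shows "\<exists>\<mu>. B *v z = \<mu> *\<^sub>R (A *v z)"
proof -
  obtain a b where ab: "a *\<^sub>R (A *v z) + b *\<^sub>R (B *v z) = 0" "a \<noteq> 0 \<or> b \<noteq> 0"
    using assms(1) unfolding transversal_at_def by blast
  then have "b \<noteq> 0" using assms(2) by auto
  have "b *\<^sub>R (B *v z) = - (a *\<^sub>R (A *v z))"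
    using ab(1) by (simp add: eq_neg_iff_add_eq_0 add.commute)
  then have "B *v z = (- a / b) *\<^sub>R (A *v z)" using \<open>b \<noteq> 0\<close>
    by (metis divide_inverse_commute inverse_eq_divide scaleR_minus_left scaleR_scaleR vector_fraction_eq_iff)
  then show ?thesis by blast
qed

lemma nontransversal_common_level_eq:
  assumes "\<not> transversal_at A B z" "Qform A z = r" "Qform B z = r" "r \<noteq> 0"
  shows "A *v z = B *v z"
proof -
  have "A *v z \<noteq> 0" using assms(2,4) by (auto simp: Qform_def)
  then obtain \<mu> where \<mu>: "B *v z = \<mu> *\<^sub>R (A *v z)" using nontransversal_parallel[OF assms(1)] by blast
  then have "r = \<mu> * r" using assms(2,3) by (simp add: Qform_def)
  then show ?thesis using \<mu> assms(4) by simp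
qed

lemma eventually_nhds_Qform_pos:
  fixes A :: "real^'n^'n"
  shows "0 < Qform A x \<Longrightarrow> \<forall>\<^sub>F B in nhds A. 0 < Qform B x"
  by (rule order_tendstoD(1)[OF tendsto_Qform_matrix])

lemma eventually_nhds_Qform_neg:
  fixes A :: "real^'n^'n"
  shows "Qform A x < 0 \<Longrightarrow> \<forall>\<^sub>F B in nhds A. Qform B x < 0"
  by (rule order_tendstoD(2)[OF tendsto_Qform_matrix])

lemma eventually_Gamma_comparable_pos_level:
  fixes A :: "real^'n^'n"
  assumes symA: "symmetric_mat A" and "0 < r" and u: "0 < Qform A u"
  shows "\<forall>\<^sub>F B in nhds A. symmetric_mat B \<longrightarrow>
    \<not> (\<exists>z \<in> frontier (Gamma A r) \<inter> frontier (Gamma B r). transversal_at A B z) \<longrightarrow>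
    Gamma A r \<subseteq> Gamma B r \<or> Gamma B r \<subseteq> Gamma A r"
  using eventually_nhds_Qform_pos[OF u]
proof (rule eventually_mono, intro impI)
  fix B assume uB: "0 < Qform B u" and symB: "symmetric_mat B"
    and no_transversal: "\<not> (\<exists>z \<in> frontier (Gamma A r) \<inter> frontier (Gamma B r). transversal_at A B z)"
  show "Gamma A r \<subseteq> Gamma B r \<or> Gamma B r \<subseteq> Gamma A r"
  proof (rule Gamma_comparable_pos_level[OF symA symB \<open>0 < r\<close> u uB])
    show "A *v z = B *v z" if "Qform A z = r" "Qform B z = r" for z
      using no_transversal that frontier_Gamma[OF symA u] frontier_Gamma[OF symB uB] \<open>0 < r\<close>
      by (auto intro: nontransversal_common_level_eq)
  qed
qed

lemma eventually_Gamma_comparable_zero_level: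
  fixes A :: "real^'n^'n"
  assumes symA: "symmetric_mat A" and pos_perp: "\<And>h. \<exists>x. x \<bullet> h = 0 \<and> 0 < Qform A x"
    and "bdry_is_variety A 0"
  shows "\<forall>\<^sub>F B in nhds A. symmetric_mat B \<longrightarrow>
    \<not> (\<exists>z \<in> frontier (Gamma A 0) \<inter> frontier (Gamma B 0). transversal_at A B z) \<longrightarrow>
    Gamma A 0 \<subseteq> Gamma B 0 \<or> Gamma B 0 \<subseteq> Gamma A 0"
proof -
  obtain u where u: "0 < Qform A u" using pos_perp by blast
  obtain z0 where z0: "Qform A z0 = 0" "A *v z0 \<noteq> 0"
    using assms(3) frontier_Gamma_subset unfolding bdry_is_variety_def by blast
  obtain w where w: "Qform A w < 0" using exists_Qform_neg_of_regular_null[OF symA z0] by blast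
  show ?thesis using eventually_conj[OF eventually_nhds_Qform_pos[OF u] eventually_nhds_Qform_neg[OF w]]
  proof (rule eventually_mono, intro impI)
    fix B assume uwB: "0 < Qform B u \<and> Qform B w < 0" and symB: "symmetric_mat B"
      and no_transversal: "\<not> (\<exists>z \<in> frontier (Gamma A 0) \<inter> frontier (Gamma B 0). transversal_at A B z)"
    have "tangent_null_cones A B"
      unfolding tangent_null_cones_def
      using no_transversal frontier_Gamma[OF symA u] frontier_Gamma[OF symB] uwB
      by (auto intro: nontransversal_parallel)
    then show "Gamma A 0 \<subseteq> Gamma B 0 \<or> Gamma B 0 \<subseteq> Gamma A 0"
      using Gamma_comparable_zero_level[OF symA symB pos_perp _ z0 u _ w] uwB by blast
  qed
qed

theorem theorem2p6:
  fixes W :: "(real^'n^'n) set" and A :: "real^'n^'n" and r :: real and k l :: nat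
  assumes "subspace W"
    and "\<forall>M\<in>W. symmetric_mat M"
    and "W \<noteq> {0}"
    and "r \<ge> 0"
    and "A \<in> W"
    and "\<forall>M\<in>W. rank M \<le> rank A"
    and "signature A = (k, l)"
    and "k \<ge> 2"
  shows "\<exists>\<epsilon>>0. \<forall>B\<in>W. norm (B - A) < \<epsilon> \<longrightarrow>
           bdry_is_variety A r \<longrightarrow> bdry_is_variety B r \<longrightarrow>
           \<not> (\<exists>z \<in> frontier (Gamma A r) \<inter> frontier (Gamma B r). transversal_at A B z) \<longrightarrow>
           Gamma A r \<subseteq> Gamma B r \<or> Gamma B r \<subseteq> Gamma A r"
proof -
  have symA: "symmetric_mat A" using assms(2,5) by blast
  have pos_perp: "\<And>h. \<exists>x. x \<bullet> h = 0 \<and> 0 < Qform A x"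
    using exists_orthogonal_Qform_pos[OF symA] assms(7,8) by (simp add: signature_def)
  then obtain u where u: "0 < Qform A u" by blast
  have "\<forall>\<^sub>F B in nhds A. symmetric_mat B \<longrightarrow> bdry_is_variety A r \<longrightarrow>
      \<not> (\<exists>z \<in> frontier (Gamma A r) \<inter> frontier (Gamma B r). transversal_at A B z) \<longrightarrow>
      Gamma A r \<subseteq> Gamma B r \<or> Gamma B r \<subseteq> Gamma A r" (is "\<forall>\<^sub>F B in nhds A. ?P B")
  proof (cases "r = 0")
    case False
    then have "0 < r" using assms(4) by simp
    from eventually_Gamma_comparable_pos_level[OF symA this u] show ?thesis
      by (rule eventually_mono) blast
  next
    case True
    show ?thesis
    proof (cases "bdry_is_variety A 0")
      case True
      from eventually_Gamma_comparable_zero_level[OF symA pos_perp this] show ?thesis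
        by (rule eventually_mono) (use \<open>r = 0\<close> in blast)
    qed (use \<open>r = 0\<close> in simp)
  qed
  then obtain \<epsilon> where "0 < \<epsilon>" "\<forall>B. norm (B - A) < \<epsilon> \<longrightarrow> ?P B"
    unfolding eventually_nhds_metric dist_norm by blast
  then show ?thesis using assms(2) by blast
qed

end
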